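(* Let $n\ge 2$. The number $\eta_n$ of all unordered pairs of disjoint $n^2\times n^2$ S-permutation matrices equals $$\eta_n=\frac{(n!)^{2n}}{2}\,\xi_n,\qquad\text{where}\qquad \xi_n=\sum_{\overline{A}\in\overline{\mathfrak{B}}_n,\ \varepsilon(\overline{A})\ge 2}(-1)^{\varepsilon(\overline{A})}\,|\overline{A}|\prod_{i=0}^{n-2}\left[(n-i)!\right]^{\psi_i(\overline{A})}.$$
   Context: An $n^2\times n^2$ S-permutation matrix is an $n^2\times n^2$ binary matrix which, when partitioned into $n^2$ non-intersecting consecutive $n\times n$ blocks, contains exactly one $1$ in each row, each column and each block. Two binary matrices $(a_{ij}),(b_{ij})$ of equal size are disjoint if there are no $i,j$ with $a_{ij}=b_{ij}=1$. $\mathfrak{B}_n$ is the set of $n\times n$ binary matrices. For $A\in\mathfrak{B}_n$, $r_k(A)$ (resp. $c_k(A)$) is the number of rows (resp. columns) of $A$ with exactly $k$ ones, $\psi_k(A)=r_k(A)+c_k(A)$, and $\varepsilon(A)$ is the total number of ones of $A$. $A\sim B$ iff $B$ is obtained from $A$ by permuting rows; $\overline{A}$ is the equivalence class of $A$, $|\overline{A}|$ its cardinality, $\overline{\mathfrak{B}}_n=\mathfrak{B}_n/\!\sim$; $\psi_k,\varepsilon$ are defined on classes via any representative. *)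

theory Defs
  imports Complex_Main "HOL-Combinatorics.Permutations"
begin

text \<open>A binary matrix of size m x m is represented by the set of positions
  (i,j), 0-based, with i,j < m, that carry a 1.\<close>

definition S_perm :: "nat \<Rightarrow> (nat \<times> nat) set \<Rightarrow> bool" where
  "S_perm n P \<longleftrightarrow> P \<subseteq> {..<n^2} \<times> {..<n^2}
     \<and> (\<forall>i<n^2. \<exists>!j. (i,j) \<in> P)
     \<and> (\<forall>j<n^2. \<exists>!i. (i,j) \<in> P)
     \<and> (\<forall>a<n. \<forall>b<n. \<exists>!p. p \<in> P \<and> fst p div n = a \<and> snd p div n = b)"

definition disjoint_mat :: "(nat \<times> nat) set \<Rightarrow> (nat \<times> nat) set \<Rightarrow> bool" where
  "disjoint_mat P Q \<longleftrightarrow> P \<inter> Q = {}"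

definition eta :: "nat \<Rightarrow> nat" where
  "eta n = card {{P, Q} | P Q. S_perm n P \<and> S_perm n Q \<and> disjoint_mat P Q}"

definition binmats :: "nat \<Rightarrow> (nat \<times> nat) set set" where
  "binmats n = Pow ({..<n} \<times> {..<n})"

definition row_equiv :: "nat \<Rightarrow> ((nat \<times> nat) set \<times> (nat \<times> nat) set) set" where
  "row_equiv n = {(A, B). A \<in> binmats n \<and>
      (\<exists>\<sigma>. \<sigma> permutes {..<n} \<and> B = (\<lambda>(i,j). (\<sigma> i, j)) ` A)}"

definition binclasses :: "nat \<Rightarrow> (nat \<times> nat) set set set" where
  "binclasses n = binmats n // row_equiv n"

definition r_k :: "nat \<Rightarrow> nat \<Rightarrow> (nat \<times> nat) set \<Rightarrow> nat" where
  "r_k n k A = card {i. i < n \<and> card {j. j < n \<and> (i,j) \<in> A} = k}"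

definition c_k :: "nat \<Rightarrow> nat \<Rightarrow> (nat \<times> nat) set \<Rightarrow> nat" where
  "c_k n k A = card {j. j < n \<and> card {i. i < n \<and> (i,j) \<in> A} = k}"

definition psi :: "nat \<Rightarrow> nat \<Rightarrow> (nat \<times> nat) set \<Rightarrow> nat" where
  "psi n k A = r_k n k A + c_k n k A"

definition eps :: "(nat \<times> nat) set \<Rightarrow> nat" where
  "eps A = card A"

definition rep :: "(nat \<times> nat) set set \<Rightarrow> (nat \<times> nat) set" where
  "rep C = (SOME A. A \<in> C)"

definition xi :: "nat \<Rightarrow> int" where
  "xi n = (\<Sum>C \<in> {C \<in> binclasses n. eps (rep C) \<ge> 2}.
      (-1) ^ eps (rep C) * int (card C) *
      (\<Prod>i = 0..n-2. (int (fact (n - i))) ^ psi n i (rep C)))"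

end

theory Submission
  imports Defs
begin

text \<open>An S-permutation matrix of order \<open>n\<close> is the same as two families of \<open>n\<close> permutations
  of \<open>{0..n-1}\<close>: \<open>F a\<close> sends \<open>r\<close> to the block column of the 1 in row \<open>a n + r\<close>, and \<open>G b\<close>
  sends \<open>s\<close> to the block row of the 1 in column \<open>b n + s\<close>; so there are \<open>(n!)^(2n)\<close> of them.
  Requiring a matrix to contain a set \<open>T\<close> of 1s of a fixed S-permutation matrix \<open>P\<close> fixes some
  values of these permutations, so the number of such matrices is the product of \<open>(n - k)!\<close>
  over the block rows and block columns meeting \<open>k\<close> blocks of \<open>T\<close>. As \<open>P\<close> has exactly one 1 in
  each block, the subsets \<open>T\<close> of \<open>P\<close> correspond to the binary \<open>n \<times> n\<close> matrices \<open>A\<close>, and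
  inclusion-exclusion counts the matrices disjoint from \<open>P\<close> by an alternating sum over all \<open>A\<close>
  that does not depend on \<open>P\<close>. In this sum the terms with \<open>\<epsilon>(A) < 2\<close> cancel, and the others are
  constant on the classes of row permutations, which turns it into \<open>\<xi>\<^sub>n\<close>. Every unordered pair
  is counted twice among the ordered ones.\<close>

lemma ex_permutes_extending:
  assumes fin: "finite S" and R: "R \<subseteq> S \<times> S" and inj_fst: "inj_on fst R" and inj_snd: "inj_on snd R"
  obtains \<tau> where "\<tau> permutes S" "\<And>x y. (x, y) \<in> R \<Longrightarrow> \<tau> x = y"
proof -
  define h where "h = snd \<circ> the_inv_into R fst"
  have "bij_betw (the_inv_into R fst) (fst ` R) R"
    using inj_fst by (intro bij_betw_the_inv_into inj_on_imp_bij_betw)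
  then have h: "bij_betw h (fst ` R) (snd ` R)"
    unfolding h_def using inj_snd by (intro bij_betw_trans) (auto simp: bij_betw_def)
  have h_R: "h x = y" if "(x, y) \<in> R" for x y
    using that inj_fst by (simp add: h_def the_inv_into_f_eq[of fst R "(x, y)"])
  have "fst ` R \<subseteq> S" "snd ` R \<subseteq> S"
    using R by auto
  then have "card (S - fst ` R) = card (S - snd ` R)"
    using fin by (simp add: card_Diff_subset finite_subset card_image inj_fst inj_snd)
  then obtain g where g: "bij_betw g (S - fst ` R) (S - snd ` R)"
    using fin finite_same_card_bij by blast
  have "bij_betw (\<lambda>x. if x \<in> fst ` R then h x else g x) (fst ` R \<union> (S - fst ` R)) (snd ` R \<union> (S - snd ` R))"
    by (rule bij_betw_disjoint_Un[OF h g]) auto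
  moreover have "fst ` R \<union> (S - fst ` R) = S" "snd ` R \<union> (S - snd ` R) = S"
    using R by auto
  ultimately have "restrict_id (\<lambda>x. if x \<in> fst ` R then h x else g x) S permutes S"
    by (intro permutes_restrict_id) simp
  moreover have "restrict_id (\<lambda>x. if x \<in> fst ` R then h x else g x) S x = y" if "(x, y) \<in> R" for x y
    using that R h_R by (force simp: restrict_id_def)
  ultimately show thesis by (rule that)
qed

lemma permutes_extending_eq_image:
  assumes \<tau>: "\<tau> permutes S" and \<tau>_R: "\<And>x y. (x, y) \<in> R \<Longrightarrow> \<tau> x = y"
  shows "{p. p permutes S \<and> (\<forall>(x, y)\<in>R. p x = y)} = (\<lambda>q. \<tau> \<circ> q) ` {q. q permutes S - fst ` R}"
proof (intro equalityI subsetI)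
  fix p assume "p \<in> {p. p permutes S \<and> (\<forall>(x, y)\<in>R. p x = y)}"
  then have p: "p permutes S" "\<And>x y. (x, y) \<in> R \<Longrightarrow> p x = y" by auto
  have "inv \<tau> \<circ> p permutes S"
    using p(1) \<tau> by (simp add: permutes_compose permutes_inv)
  moreover have "(inv \<tau> \<circ> p) x = x" if "(x, y) \<in> R" for x y
    using p(2)[OF that] \<tau>_R[OF that] permutes_inverses(2)[OF \<tau>] by (metis comp_apply)
  ultimately have "inv \<tau> \<circ> p permutes S - fst ` R"
    unfolding permutes_def by fastforce
  moreover have "p = \<tau> \<circ> (inv \<tau> \<circ> p)"
    using permutes_inverses(1)[OF \<tau>] by (simp add: fun_eq_iff)
  ultimately show "p \<in> (\<lambda>q. \<tau> \<circ> q) ` {q. q permutes S - fst ` R}" by blast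
next
  fix p assume "p \<in> (\<lambda>q. \<tau> \<circ> q) ` {q. q permutes S - fst ` R}"
  then obtain q where q: "q permutes S - fst ` R" and p: "p = \<tau> \<circ> q" by auto
  have "p permutes S"
    using p q \<tau> permutes_compose permutes_subset by blast
  moreover have "p x = y" if "(x, y) \<in> R" for x y
  proof -
    have "q x = x"
      using that by (intro permutes_not_in[OF q]) force
    then show ?thesis
      using that p \<tau>_R by simp
  qed
  ultimately show "p \<in> {p. p permutes S \<and> (\<forall>(x, y)\<in>R. p x = y)}" by auto
qed

lemma card_permutes_extending:
  assumes fin: "finite S" and R: "R \<subseteq> S \<times> S" and inj_fst: "inj_on fst R" and inj_snd: "inj_on snd R"
  shows "card {p. p permutes S \<and> (\<forall>(x, y)\<in>R. p x = y)} = fact (card S - card R)"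
proof -
  obtain \<tau> where \<tau>: "\<tau> permutes S" and \<tau>_R: "\<And>x y. (x, y) \<in> R \<Longrightarrow> \<tau> x = y"
    using ex_permutes_extending[OF assms] by blast
  have "inj_on (\<lambda>q. \<tau> \<circ> q) {q. q permutes S - fst ` R}"
    using permutes_inj[OF \<tau>] by (auto simp: inj_on_def fun_eq_iff)
  then have "card {p. p permutes S \<and> (\<forall>(x, y)\<in>R. p x = y)} = card {q. q permutes S - fst ` R}"
    by (simp add: permutes_extending_eq_image[OF \<tau> \<tau>_R] card_image)
  also have "\<dots> = fact (card (S - fst ` R))"
    using fin by (simp add: card_permutations)
  also have "card (S - fst ` R) = card S - card R"
    using R fin by (subst card_Diff_subset) (auto simp: finite_subset card_image inj_fst)
  finally show ?thesis .
qed

lemma permutes_lessThan_less: "p permutes {..<n} \<Longrightarrow> x < n \<Longrightarrow> p x < (n::nat)"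
  using permutes_in_image by fastforce

lemma div_less_of_less_square: "i < n^2 \<Longrightarrow> i div n < (n::nat)"
  by (simp add: less_mult_imp_div_less power2_eq_square)

lemma mod_less_of_less_square: "i < n^2 \<Longrightarrow> i mod n < (n::nat)"
  by (cases "n = 0") auto

lemma block_index_less_square: "a < n \<Longrightarrow> r < n \<Longrightarrow> a * n + r < (n::nat)^2"
  using mult_le_mono1[of "Suc a" n n] by (simp add: power2_eq_square)

lemma S_permD:
  assumes "S_perm n Q"
  shows "Q \<subseteq> {..<n^2} \<times> {..<n^2}" "\<forall>i<n^2. \<exists>!j. (i, j) \<in> Q" "\<forall>j<n^2. \<exists>!i. (i, j) \<in> Q"
    "\<forall>a<n. \<forall>b<n. \<exists>!p. p \<in> Q \<and> fst p div n = a \<and> snd p div n = b"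
  using assms unfolding S_perm_def by simp_all

lemma S_perm_subset:
  assumes "S_perm n Q" "(i, j) \<in> Q"
  shows "i < n^2 \<and> j < n^2"
  using subsetD[OF S_permD(1)[OF assms(1)] assms(2)] by simp

lemma S_perm_same_block:
  assumes Q: "S_perm n Q" and "(i, j) \<in> Q" "(i', j') \<in> Q"
    and "i div n = i' div n" "j div n = j' div n"
  shows "(i, j) = (i', j')"
proof -
  have "i div n < n" "j div n < n"
    using S_perm_subset[OF Q \<open>(i, j) \<in> Q\<close>] div_less_of_less_square by auto
  then have "\<exists>!p. p \<in> Q \<and> fst p div n = i div n \<and> snd p div n = j div n"
    using S_permD(4)[OF Q] by blast
  then show ?thesis
    using assms(2-5) by (metis fst_conv snd_conv)
qed

lemma S_perm_converse_if:
  assumes Q: "S_perm n Q"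
  shows "S_perm n (Q\<inverse>)"
  unfolding S_perm_def
proof (intro conjI allI impI)
  show "Q\<inverse> \<subseteq> {..<n^2} \<times> {..<n^2}"
    using S_perm_subset[OF Q] by auto
  show "\<exists>!j. (i, j) \<in> Q\<inverse>" "\<exists>!j. (j, i) \<in> Q\<inverse>" if "i < n^2" for i
    using S_permD(2,3)[OF Q] that by simp_all
next
  fix a b assume "a < n" "b < n"
  then have "\<exists>!p. p \<in> Q \<and> fst p div n = b \<and> snd p div n = a"
    using S_permD(4)[OF Q] by blast
  then obtain p where p: "p \<in> Q \<and> fst p div n = b \<and> snd p div n = a"
    and p_unique: "\<forall>q. q \<in> Q \<and> fst q div n = b \<and> snd q div n = a \<longrightarrow> q = p"
    by (elim ex1E)
  show "\<exists>!p. p \<in> Q\<inverse> \<and> fst p div n = a \<and> snd p div n = b"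
  proof (rule ex1I[of _ "prod.swap p"])
    fix q assume "q \<in> Q\<inverse> \<and> fst q div n = a \<and> snd q div n = b"
    then have "prod.swap q \<in> Q \<and> fst (prod.swap q) div n = b \<and> snd (prod.swap q) div n = a"
      by (cases q) simp
    then show "q = prod.swap p"
      using p_unique by (metis swap_swap)
  qed (use p in \<open>cases p; simp\<close>)
qed

lemma S_perm_converse [simp]: "S_perm n (Q\<inverse>) \<longleftrightarrow> S_perm n Q"
  using S_perm_converse_if[of n Q] S_perm_converse_if[of n "Q\<inverse>"] by auto

definition perm_families :: "nat \<Rightarrow> (nat \<Rightarrow> nat \<Rightarrow> nat) set" where
  "perm_families n = {..<n} \<rightarrow>\<^sub>E {p. p permutes {..<n}}"

text \<open>\<open>row_blocks\<close> below recovers \<open>F\<close> from \<open>S_perm_of n F G\<close> and \<open>G\<close> from its transpose, so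
  statements about block columns follow from those about block rows by transposition.\<close>

definition S_perm_of :: "nat \<Rightarrow> (nat \<Rightarrow> nat \<Rightarrow> nat) \<Rightarrow> (nat \<Rightarrow> nat \<Rightarrow> nat) \<Rightarrow> (nat \<times> nat) set" where
  "S_perm_of n F G = {(i, j). i < n^2 \<and> j < n^2 \<and>
     F (i div n) (i mod n) = j div n \<and> G (j div n) (j mod n) = i div n}"

lemma converse_S_perm_of: "(S_perm_of n F G)\<inverse> = S_perm_of n G F"
  by (auto simp: S_perm_of_def)

lemma perm_families_permutes: "F \<in> perm_families n \<Longrightarrow> a < n \<Longrightarrow> F a permutes {..<n}"
  by (auto simp: perm_families_def)

lemma S_perm_of_row:
  assumes F: "F \<in> perm_families n" and G: "G \<in> perm_families n" and i: "i < n^2"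
  shows "\<exists>!j. (i, j) \<in> S_perm_of n F G"
proof -
  define b where "b = F (i div n) (i mod n)"
  define s where "s = inv (G b) (i div n)"
  have a: "i div n < n" using div_less_of_less_square[OF i] .
  have b: "b < n"
    unfolding b_def using perm_families_permutes[OF F a] mod_less_of_less_square[OF i]
    by (rule permutes_lessThan_less)
  have G_b: "G b permutes {..<n}" using perm_families_permutes[OF G b] .
  have s: "s < n"
    unfolding s_def using permutes_inv[OF G_b] a by (rule permutes_lessThan_less)
  have G_b_eq: "G b t = i div n \<longleftrightarrow> t = s" for t
    unfolding s_def using permutes_inv_eq[OF G_b] by metis
  show ?thesis
  proof (rule ex1I[of _ "b * n + s"])
    show "(i, b * n + s) \<in> S_perm_of n F G"
      using i block_index_less_square[OF b s] s G_b_eq by (simp add: S_perm_of_def b_def)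
  next
    fix j assume "(i, j) \<in> S_perm_of n F G"
    then have "j div n = b" "j mod n = s"
      using G_b_eq by (auto simp: S_perm_of_def b_def)
    then show "j = b * n + s"
      using div_mult_mod_eq[of j n] by simp
  qed
qed

lemma S_perm_of_block:
  assumes F: "F \<in> perm_families n" and G: "G \<in> perm_families n" and a: "a < n" and b: "b < n"
  shows "\<exists>!p. p \<in> S_perm_of n F G \<and> fst p div n = a \<and> snd p div n = b"
proof -
  have F_a: "F a permutes {..<n}" and G_b: "G b permutes {..<n}"
    using perm_families_permutes F G a b by auto
  define r where "r = inv (F a) b"
  define s where "s = inv (G b) a"
  have r: "r < n" and s: "s < n"
    unfolding r_def s_def using permutes_inv F_a G_b a b by (auto intro: permutes_lessThan_less)
  have F_a_eq: "F a t = b \<longleftrightarrow> t = r" and G_b_eq: "G b t = a \<longleftrightarrow> t = s" for t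
    unfolding r_def s_def using permutes_inv_eq F_a G_b by metis+
  show ?thesis
  proof (rule ex1I[of _ "(a * n + r, b * n + s)"])
    show "(a * n + r, b * n + s) \<in> S_perm_of n F G \<and> fst (a * n + r, b * n + s) div n = a
        \<and> snd (a * n + r, b * n + s) div n = b"
      using block_index_less_square a b r s F_a_eq G_b_eq by (simp add: S_perm_of_def)
  next
    fix p assume p: "p \<in> S_perm_of n F G \<and> fst p div n = a \<and> snd p div n = b"
    obtain i j where ij: "p = (i, j)" by fastforce
    have "i div n = a" "j div n = b" "F a (i mod n) = b" "G b (j mod n) = a"
      using p by (auto simp: S_perm_of_def ij)
    then show "p = (a * n + r, b * n + s)"
      using F_a_eq G_b_eq div_mult_mod_eq[of i n] div_mult_mod_eq[of j n] ij by metis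
  qed
qed

lemma S_perm_S_perm_of:
  assumes F: "F \<in> perm_families n" and G: "G \<in> perm_families n"
  shows "S_perm n (S_perm_of n F G)"
  unfolding S_perm_def
proof (intro conjI allI impI)
  show "S_perm_of n F G \<subseteq> {..<n^2} \<times> {..<n^2}"
    by (auto simp: S_perm_of_def)
next
  fix i assume "i < n^2"
  then show "\<exists>!j. (i, j) \<in> S_perm_of n F G"
    by (rule S_perm_of_row[OF F G])
next
  fix j assume "j < n^2"
  then have "\<exists>!i. (j, i) \<in> S_perm_of n G F"
    by (rule S_perm_of_row[OF G F])
  then show "\<exists>!i. (i, j) \<in> S_perm_of n F G"
    unfolding converse_S_perm_of[of n F G, symmetric] by simp
next
  fix a b assume "a < n" "b < n"
  then show "\<exists>!p. p \<in> S_perm_of n F G \<and> fst p div n = a \<and> snd p div n = b"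
    by (rule S_perm_of_block[OF F G])
qed

definition row_blocks :: "nat \<Rightarrow> (nat \<times> nat) set \<Rightarrow> nat \<Rightarrow> nat \<Rightarrow> nat" where
  "row_blocks n Q = (\<lambda>a\<in>{..<n}. \<lambda>r. if r < n then (THE j. (a * n + r, j) \<in> Q) div n else r)"

lemma row_blocks_eq:
  assumes Q: "S_perm n Q" and ij: "(i, j) \<in> Q"
  shows "row_blocks n Q (i div n) (i mod n) = j div n"
proof -
  have i: "i < n^2"
    using S_perm_subset[OF Q ij] by simp
  then have "\<exists>!j. (i, j) \<in> Q"
    using S_permD(2)[OF Q] by blast
  then have "(THE j'. (i, j') \<in> Q) = j"
    using ij by (rule the1_equality)
  then show ?thesis
    using div_less_of_less_square[OF i] mod_less_of_less_square[OF i] by (simp add: row_blocks_def)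
qed

lemma row_blocks_permutes:
  assumes Q: "S_perm n Q" and a: "a < n"
  shows "row_blocks n Q a permutes {..<n}"
proof (rule bij_imp_permutes)
  have entry: "\<exists>j. (a * n + r, j) \<in> Q \<and> row_blocks n Q a r = j div n" if r: "r < n" for r
  proof -
    have "a * n + r < n^2"
      using a r by (rule block_index_less_square)
    then obtain j where j: "(a * n + r, j) \<in> Q"
      using S_permD(2)[OF Q] by blast
    then show ?thesis
      using row_blocks_eq[OF Q j] r by auto
  qed
  have "row_blocks n Q a ` {..<n} \<subseteq> {..<n}"
    using entry S_perm_subset[OF Q] div_less_of_less_square by fastforce
  moreover have "inj_on (row_blocks n Q a) {..<n}"
  proof (rule inj_onI)
    fix r r' assume r: "r \<in> {..<n}" "r' \<in> {..<n}" and eq: "row_blocks n Q a r = row_blocks n Q a r'"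
    obtain j j' where "(a * n + r, j) \<in> Q" "(a * n + r', j') \<in> Q" "j div n = j' div n"
      using entry r eq by (metis lessThan_iff)
    then have "(a * n + r, j) = (a * n + r', j')"
      using r by (intro S_perm_same_block[OF Q]) auto
    then show "r = r'" by simp
  qed
  ultimately show "bij_betw (row_blocks n Q a) {..<n} {..<n}"
    by (simp add: bij_betw_def endo_inj_surj)
  show "row_blocks n Q a r = r" if "r \<notin> {..<n}" for r
    using that a by (simp add: row_blocks_def)
qed

lemma row_blocks_in_perm_families: "S_perm n Q \<Longrightarrow> row_blocks n Q \<in> perm_families n"
  using row_blocks_permutes by (auto simp: perm_families_def row_blocks_def)

lemma row_blocks_S_perm_of:
  assumes F: "F \<in> perm_families n" and G: "G \<in> perm_families n"
  shows "row_blocks n (S_perm_of n F G) = F"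
proof (rule PiE_ext)
  show "row_blocks n (S_perm_of n F G) \<in> {..<n} \<rightarrow>\<^sub>E {p. p permutes {..<n}}"
    using row_blocks_in_perm_families[OF S_perm_S_perm_of[OF F G]] by (simp add: perm_families_def)
  fix a assume "a \<in> {..<n}"
  then have a: "a < n" by simp
  show "row_blocks n (S_perm_of n F G) a = F a"
  proof
    fix r show "row_blocks n (S_perm_of n F G) a r = F a r"
    proof (cases "r < n")
      case True
      then obtain j where j: "(a * n + r, j) \<in> S_perm_of n F G"
        using S_perm_of_row[OF F G block_index_less_square[OF a True]] by blast
      then show ?thesis
        using row_blocks_eq[OF S_perm_S_perm_of[OF F G] j] True by (simp add: S_perm_of_def)
    next
      case False
      then show ?thesis
        using a permutes_not_in[OF perm_families_permutes[OF F a]] by (simp add: row_blocks_def)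
    qed
  qed
qed (use F in \<open>simp add: perm_families_def\<close>)

lemma S_perm_of_row_blocks:
  assumes Q: "S_perm n Q"
  shows "S_perm_of n (row_blocks n Q) (row_blocks n (Q\<inverse>)) = Q"
proof (intro equalityI subsetI)
  fix x assume "x \<in> S_perm_of n (row_blocks n Q) (row_blocks n (Q\<inverse>))"
  then obtain i j where x: "x = (i, j)" and ij: "i < n^2" "j < n^2"
    and row: "row_blocks n Q (i div n) (i mod n) = j div n"
    and col: "row_blocks n (Q\<inverse>) (j div n) (j mod n) = i div n"
    by (auto simp: S_perm_of_def)
  obtain j' where j': "(i, j') \<in> Q"
    using S_permD(2)[OF Q] ij by blast
  obtain i' where i': "(i', j) \<in> Q"
    using S_permD(3)[OF Q] ij by blast
  have "(i, j') = (i', j)"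
  proof (rule S_perm_same_block[OF Q j' i'])
    show "i div n = i' div n"
      using row_blocks_eq[of n "Q\<inverse>" j i'] i' col Q by simp
    show "j' div n = j div n"
      using row_blocks_eq[OF Q j'] row by simp
  qed
  then show "x \<in> Q"
    using x j' by simp
next
  fix x assume "x \<in> Q"
  moreover obtain i j where x: "x = (i, j)" by fastforce
  ultimately show "x \<in> S_perm_of n (row_blocks n Q) (row_blocks n (Q\<inverse>))"
    using S_perm_subset[OF Q] row_blocks_eq[OF Q] row_blocks_eq[of n "Q\<inverse>" j i] Q
    by (simp add: S_perm_of_def)
qed

lemma bij_betw_S_perm_of:
  "bij_betw (\<lambda>(F, G). S_perm_of n F G) (perm_families n \<times> perm_families n) {Q. S_perm n Q}"
proof (rule bij_betw_byWitness[where f' = "\<lambda>Q. (row_blocks n Q, row_blocks n (Q\<inverse>))"])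
  show "\<forall>x\<in>perm_families n \<times> perm_families n.
      (\<lambda>Q. (row_blocks n Q, row_blocks n (Q\<inverse>))) ((\<lambda>(F, G). S_perm_of n F G) x) = x"
    by (auto simp: row_blocks_S_perm_of converse_S_perm_of)
  show "(\<lambda>(F, G). S_perm_of n F G) ` (perm_families n \<times> perm_families n) \<subseteq> {Q. S_perm n Q}"
    by (auto intro: S_perm_S_perm_of)
qed (auto simp: S_perm_of_row_blocks row_blocks_in_perm_families)

lemma card_S_perm: "card {Q. S_perm n Q} = fact n ^ (2 * n)"
proof -
  have "card (perm_families n) = fact n ^ n"
    by (simp add: perm_families_def card_PiE card_permutations)
  then show ?thesis
    using bij_betw_same_card[OF bij_betw_S_perm_of[of n]]
    by (simp add: card_cartesian_product power_mult_distrib mult_2 power_add)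
qed

lemma S_perm_same_row: "S_perm n Q \<Longrightarrow> (i, j) \<in> Q \<Longrightarrow> (i, j') \<in> Q \<Longrightarrow> j = j'"
  using S_permD(2) S_perm_subset by metis

definition block_pos :: "nat \<Rightarrow> nat \<times> nat \<Rightarrow> nat \<times> nat" where
  "block_pos n = (\<lambda>(i, j). (i div n, j div n))"

definition row_weight :: "nat \<Rightarrow> (nat \<times> nat) set \<Rightarrow> nat" where
  "row_weight n A = (\<Prod>a<n. fact (n - card {b. b < n \<and> (a, b) \<in> A}))"

definition block_weight :: "nat \<Rightarrow> (nat \<times> nat) set \<Rightarrow> nat" where
  "block_weight n A = row_weight n A * row_weight n (A\<inverse>)"

lemma block_row_prescription_inj:
  fixes a :: nat
  assumes P: "S_perm n P" and T: "T \<subseteq> P"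
  defines "R \<equiv> (\<lambda>(i, j). (i mod n, j div n)) ` {(i, j) \<in> T. i div n = a}"
  shows "inj_on fst R" "inj_on snd R"
proof -
  show "inj_on fst R"
  proof (rule inj_onI)
    fix u v assume "u \<in> R" "v \<in> R" "fst u = fst v"
    then obtain i j i' j' where "(i, j) \<in> T" "(i', j') \<in> T" "i div n = i' div n" "i mod n = i' mod n"
      and uv: "u = (i mod n, j div n)" "v = (i' mod n, j' div n)"
      by (auto simp: R_def)
    then have "j = j'"
      using div_mult_mod_eq[of i n] div_mult_mod_eq[of i' n] T S_perm_same_row[OF P] by (metis subsetD)
    then show "u = v"
      using uv \<open>i mod n = i' mod n\<close> by simp
  qed
  show "inj_on snd R"
  proof (rule inj_onI)
    fix u v assume "u \<in> R" "v \<in> R" "snd u = snd v"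
    then obtain i j i' j' where "(i, j) \<in> T" "(i', j') \<in> T" "i div n = i' div n" "j div n = j' div n"
      and uv: "u = (i mod n, j div n)" "v = (i' mod n, j' div n)"
      by (auto simp: R_def)
    then have "(i, j) = (i', j')"
      using T by (intro S_perm_same_block[OF P]) auto
    then show "u = v"
      using uv by simp
  qed
qed

lemma card_permutes_block_row:
  assumes P: "S_perm n P" and T: "T \<subseteq> P"
  shows "card {p. p permutes {..<n} \<and> (\<forall>(i, j)\<in>T. i div n = a \<longrightarrow> p (i mod n) = j div n)}
    = fact (n - card {b. b < n \<and> (a, b) \<in> block_pos n ` T})"
proof -
  \<comment> \<open>The 1s of \<open>T\<close> in block row \<open>a\<close> lie in distinct rows and distinct blocks, so they
    prescribe the permutation of block row \<open>a\<close> on a partial injection \<open>R\<close>.\<close>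
  define R where "R = (\<lambda>(i, j). (i mod n, j div n)) ` {(i, j) \<in> T. i div n = a}"
  have T_sq: "i < n^2" "j < n^2" if "(i, j) \<in> T" for i j
    using S_perm_subset[OF P] T that by auto
  have inj: "inj_on fst R" "inj_on snd R"
    unfolding R_def by (rule block_row_prescription_inj[OF P T])+
  have "snd ` R = {b. b < n \<and> (a, b) \<in> block_pos n ` T}"
    using T_sq div_less_of_less_square by (force simp: R_def block_pos_def)
  then have "card R = card {b. b < n \<and> (a, b) \<in> block_pos n ` T}"
    using card_image[OF inj(2)] by simp
  moreover have "R \<subseteq> {..<n} \<times> {..<n}"
    using T_sq mod_less_of_less_square div_less_of_less_square by (auto simp: R_def)
  moreover have "{p. p permutes {..<n} \<and> (\<forall>(i, j)\<in>T. i div n = a \<longrightarrow> p (i mod n) = j div n)}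
      = {p. p permutes {..<n} \<and> (\<forall>(x, y)\<in>R. p x = y)}"
    by (auto simp: R_def)
  ultimately show ?thesis
    using card_permutes_extending[of "{..<n}" R] inj by simp
qed

definition families_through :: "nat \<Rightarrow> (nat \<times> nat) set \<Rightarrow> (nat \<Rightarrow> nat \<Rightarrow> nat) set" where
  "families_through n T = {F \<in> perm_families n. \<forall>(i, j)\<in>T. F (i div n) (i mod n) = j div n}"

lemma card_families_through:
  assumes P: "S_perm n P" and T: "T \<subseteq> P"
  shows "card (families_through n T) = row_weight n (block_pos n ` T)"
proof -
  let ?fixing = "\<lambda>a. {p. p permutes {..<n} \<and> (\<forall>(i, j)\<in>T. i div n = a \<longrightarrow> p (i mod n) = j div n)}"
  have T_rows: "i div n < n" if "(i, j) \<in> T" for i j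
    using S_perm_subset[OF P] T that div_less_of_less_square by blast
  have "families_through n T = PiE {..<n} ?fixing"
  proof (intro equalityI subsetI)
    fix F assume "F \<in> families_through n T"
    then show "F \<in> PiE {..<n} ?fixing"
      by (auto simp: families_through_def perm_families_def PiE_iff)
  next
    fix F assume F: "F \<in> PiE {..<n} ?fixing"
    then have "F (i div n) (i mod n) = j div n" if "(i, j) \<in> T" for i j
      using that T_rows[OF that] by (auto simp: PiE_iff)
    moreover have "F \<in> perm_families n"
      using F by (auto simp: perm_families_def PiE_iff)
    ultimately show "F \<in> families_through n T"
      by (auto simp: families_through_def)
  qed
  then show ?thesis
    using card_permutes_block_row[OF P T] by (simp add: card_PiE row_weight_def)
qed

lemma S_perm_superset_eq_image:
  assumes P: "S_perm n P" and T: "T \<subseteq> P"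
  shows "{Q. S_perm n Q \<and> T \<subseteq> Q}
    = (\<lambda>(F, G). S_perm_of n F G) ` (families_through n T \<times> families_through n (T\<inverse>))"
proof (intro equalityI subsetI)
  fix Q assume "Q \<in> {Q. S_perm n Q \<and> T \<subseteq> Q}"
  then have Q: "S_perm n Q" "S_perm n (Q\<inverse>)" and TQ: "T \<subseteq> Q" "T\<inverse> \<subseteq> Q\<inverse>"
    by auto
  have "row_blocks n Q \<in> families_through n T" "row_blocks n (Q\<inverse>) \<in> families_through n (T\<inverse>)"
    using row_blocks_in_perm_families[OF Q(1)] row_blocks_in_perm_families[OF Q(2)]
      row_blocks_eq[OF Q(1)] row_blocks_eq[OF Q(2)] TQ
    unfolding families_through_def by blast+
  then show "Q \<in> (\<lambda>(F, G). S_perm_of n F G) ` (families_through n T \<times> families_through n (T\<inverse>))"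
    using S_perm_of_row_blocks[OF Q(1)]
    by (intro image_eqI[of _ _ "(row_blocks n Q, row_blocks n (Q\<inverse>))"]) auto
next
  fix Q assume "Q \<in> (\<lambda>(F, G). S_perm_of n F G) ` (families_through n T \<times> families_through n (T\<inverse>))"
  then obtain F G where F: "F \<in> families_through n T" and G: "G \<in> families_through n (T\<inverse>)"
    and Q: "Q = S_perm_of n F G"
    by blast
  have "i < n^2 \<and> j < n^2" if "(i, j) \<in> T" for i j
    using S_perm_subset[OF P] T that by auto
  then have "T \<subseteq> Q"
    using F G by (fastforce simp: Q S_perm_of_def families_through_def)
  then show "Q \<in> {Q. S_perm n Q \<and> T \<subseteq> Q}"
    using F G S_perm_S_perm_of by (auto simp: Q families_through_def)
qed

lemma card_S_perm_superset:
  assumes P: "S_perm n P" and T: "T \<subseteq> P"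
  shows "card {Q. S_perm n Q \<and> T \<subseteq> Q} = block_weight n (block_pos n ` T)"
proof -
  have "bij_betw (\<lambda>(F, G). S_perm_of n F G) (families_through n T \<times> families_through n (T\<inverse>))
      {Q. S_perm n Q \<and> T \<subseteq> Q}"
    by (rule bij_betw_subset[OF bij_betw_S_perm_of])
      (auto simp: families_through_def S_perm_superset_eq_image[OF P T])
  then have "card {Q. S_perm n Q \<and> T \<subseteq> Q} = card (families_through n T) * card (families_through n (T\<inverse>))"
    by (simp add: bij_betw_same_card[symmetric] card_cartesian_product)
  also have "\<dots> = row_weight n (block_pos n ` T) * row_weight n (block_pos n ` (T\<inverse>))"
    using card_families_through[OF P T] card_families_through[of n "P\<inverse>" "T\<inverse>"] P T by auto
  also have "block_pos n ` (T\<inverse>) = (block_pos n ` T)\<inverse>"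
    by (force simp: block_pos_def)
  finally show ?thesis
    by (simp add: block_weight_def)
qed

lemma sum_Pow_neg_one_power:
  assumes "finite X"
  shows "(\<Sum>T\<in>Pow X. (-1) ^ card T) = (if X = {} then 1 else (0::'a::comm_ring_1))"
proof -
  have "(\<Prod>x\<in>X. (1::'a) - 1) = (\<Sum>T\<in>Pow X. (-1) ^ card T * (\<Prod>x\<in>T. 1) * (\<Prod>x\<in>X - T. 1))"
    by (rule prod_diff_conv_sum[OF assms])
  then show ?thesis
    using assms by (simp add: power_0_left)
qed

lemma card_disjoint_inclusion_exclusion:
  fixes \<Q> :: "'a set set"
  assumes fin_\<Q>: "finite \<Q>" and fin_P: "finite P"
  shows "int (card {Q \<in> \<Q>. P \<inter> Q = {}}) = (\<Sum>T\<in>Pow P. (-1) ^ card T * int (card {Q \<in> \<Q>. T \<subseteq> Q}))"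
proof -
  have count: "int (card {Q \<in> \<Q>. C Q}) = (\<Sum>Q\<in>\<Q>. if C Q then 1 else 0)" for C
    using sum.inter_filter[OF fin_\<Q>, of "\<lambda>_. 1::int" C] by simp
  have "(\<Sum>T\<in>Pow P. (-1) ^ card T * int (card {Q \<in> \<Q>. T \<subseteq> Q}))
      = (\<Sum>T\<in>Pow P. \<Sum>Q\<in>\<Q>. if T \<subseteq> Q then (-1) ^ card T else 0)"
    by (simp add: count sum_distrib_left if_distrib cong: if_cong)
  also have "\<dots> = (\<Sum>Q\<in>\<Q>. \<Sum>T\<in>Pow P. if T \<subseteq> Q then (-1) ^ card T else 0)"
    by (rule sum.swap)
  also have "\<dots> = (\<Sum>Q\<in>\<Q>. \<Sum>T\<in>Pow (P \<inter> Q). (-1) ^ card T)"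
  proof (rule sum.cong[OF refl])
    fix Q
    have "{T \<in> Pow P. T \<subseteq> Q} = Pow (P \<inter> Q)" by auto
    then show "(\<Sum>T\<in>Pow P. if T \<subseteq> Q then (-1::int) ^ card T else 0) = (\<Sum>T\<in>Pow (P \<inter> Q). (-1) ^ card T)"
      using sum.inter_filter[of "Pow P" "\<lambda>T. (-1::int) ^ card T" "\<lambda>T. T \<subseteq> Q"] fin_P by simp
  qed
  also have "\<dots> = (\<Sum>Q\<in>\<Q>. if P \<inter> Q = {} then 1 else 0)"
    using fin_P by (intro sum.cong[OF refl] sum_Pow_neg_one_power) simp
  also have "\<dots> = int (card {Q \<in> \<Q>. P \<inter> Q = {}})"
    by (rule count[symmetric])
  finally show ?thesis ..
qed

lemma finite_S_perm: "finite {Q. S_perm n Q}"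
  using card_S_perm[of n] by (metis card_ge_0_finite fact_gt_zero zero_less_power)

definition block_sum :: "nat \<Rightarrow> int" where
  "block_sum n = (\<Sum>A\<in>binmats n. (-1) ^ card A * int (block_weight n A))"

lemma bij_betw_block_pos:
  assumes P: "S_perm n P"
  shows "bij_betw (block_pos n) P ({..<n} \<times> {..<n})"
  unfolding bij_betw_def
proof
  show "inj_on (block_pos n) P"
  proof (rule inj_onI)
    fix p q assume "p \<in> P" "q \<in> P" "block_pos n p = block_pos n q"
    then show "p = q"
      using S_perm_same_block[OF P, of "fst p" "snd p" "fst q" "snd q"] by (simp add: block_pos_def split_beta)
  qed
  show "block_pos n ` P = {..<n} \<times> {..<n}"
  proof (intro equalityI subsetI)
    fix x assume "x \<in> block_pos n ` P"
    then show "x \<in> {..<n} \<times> {..<n}"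
      using S_perm_subset[OF P] div_less_of_less_square by (auto simp: block_pos_def)
  next
    fix x assume "x \<in> {..<n} \<times> {..<n}"
    then have "\<exists>!p. p \<in> P \<and> fst p div n = fst x \<and> snd p div n = snd x"
      using S_permD(4)[OF P] by (simp add: mem_Times_iff)
    then obtain p where "p \<in> P" "fst p div n = fst x" "snd p div n = snd x"
      by blast
    then show "x \<in> block_pos n ` P"
      by (intro image_eqI[of _ _ p]) (auto simp: block_pos_def split_beta prod_eq_iff)
  qed
qed

lemma card_S_perm_disjoint:
  assumes P: "S_perm n P"
  shows "int (card {Q. S_perm n Q \<and> P \<inter> Q = {}}) = block_sum n"
proof -
  have bij: "bij_betw (block_pos n) P ({..<n} \<times> {..<n})"
    by (rule bij_betw_block_pos[OF P])
  have "finite P"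
    using S_permD(1)[OF P] finite_subset by blast
  then have "int (card {Q. S_perm n Q \<and> P \<inter> Q = {}})
      = (\<Sum>T\<in>Pow P. (-1) ^ card T * int (card {Q. S_perm n Q \<and> T \<subseteq> Q}))"
    using card_disjoint_inclusion_exclusion[OF finite_S_perm] by simp
  also have "\<dots> = (\<Sum>T\<in>Pow P. (-1) ^ card (block_pos n ` T) * int (block_weight n (block_pos n ` T)))"
  proof (rule sum.cong[OF refl])
    fix T assume T: "T \<in> Pow P"
    then have "card (block_pos n ` T) = card T"
      using bij by (intro card_image) (auto simp: bij_betw_def intro: inj_on_subset)
    then show "(-1) ^ card T * int (card {Q. S_perm n Q \<and> T \<subseteq> Q})
        = (-1) ^ card (block_pos n ` T) * int (block_weight n (block_pos n ` T))"
      using card_S_perm_superset[OF P] T by simp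
  qed
  also have "\<dots> = block_sum n"
    unfolding block_sum_def binmats_def
    by (rule sum.reindex_bij_betw[OF bij_betw_Pow[OF bij]])
  finally show ?thesis .
qed

lemma card_ordered_pairs_eq_twice_unordered:
  assumes fin: "finite {(x, y). R x y}" and sym: "\<And>x y. R x y \<Longrightarrow> R y x" and irrefl: "\<And>x. \<not> R x x"
  shows "card {(x, y). R x y} = 2 * card {{x, y} | x y. R x y}"
proof -
  let ?pair = "\<lambda>(x, y). {x, y}"
  have unordered: "{{x, y} | x y. R x y} = ?pair ` {(x, y). R x y}"
    by auto
  have "card {(x, y). R x y} = (\<Sum>u\<in>?pair ` {(x, y). R x y}. card {p \<in> {(x, y). R x y}. ?pair p = u})"
    using sum.image_gen[OF fin, of "\<lambda>_. 1::nat" ?pair] by simp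
  also have "\<dots> = (\<Sum>u\<in>?pair ` {(x, y). R x y}. 2)"
  proof (rule sum.cong[OF refl])
    fix u assume "u \<in> ?pair ` {(x, y). R x y}"
    then obtain x y where "R x y" "u = {x, y}" by auto
    moreover have "x \<noteq> y"
      using \<open>R x y\<close> irrefl by blast
    ultimately have "{p \<in> {(x, y). R x y}. ?pair p = u} = {(x, y), (y, x)}"
      using sym by (auto simp: doubleton_eq_iff)
    then show "card {p \<in> {(x, y). R x y}. ?pair p = u} = 2"
      using \<open>x \<noteq> y\<close> by simp
  qed
  finally show ?thesis
    by (simp add: unordered)
qed

lemma S_perm_nonempty: "S_perm n P \<Longrightarrow> 0 < n \<Longrightarrow> P \<noteq> {}"
  using S_permD(2)[of n P] by fastforce

lemma eta_eq_block_sum: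
  assumes n: "0 < n"
  shows "int (2 * eta n) = int (fact n ^ (2 * n)) * block_sum n"
proof -
  define R where "R P Q \<longleftrightarrow> S_perm n P \<and> S_perm n Q \<and> disjoint_mat P Q" for P Q
  have pairs: "{(P, Q). R P Q} = Sigma {P. S_perm n P} (\<lambda>P. {Q. S_perm n Q \<and> P \<inter> Q = {}})"
    by (auto simp: R_def disjoint_mat_def)
  have "int (card {(P, Q). R P Q}) = (\<Sum>P\<in>{P. S_perm n P}. int (card {Q. S_perm n Q \<and> P \<inter> Q = {}}))"
    unfolding pairs using finite_S_perm by (simp add: card_SigmaI)
  also have "\<dots> = int (fact n ^ (2 * n)) * block_sum n"
    using card_S_perm_disjoint card_S_perm by simp
  also have "card {(P, Q). R P Q} = 2 * eta n"
  proof -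
    have "finite {(P, Q). R P Q}"
      unfolding pairs using finite_S_perm by auto
    moreover have "\<not> R P P" for P
      using S_perm_nonempty n by (auto simp: R_def disjoint_mat_def)
    ultimately show ?thesis
      unfolding eta_def R_def
      by (subst card_ordered_pairs_eq_twice_unordered) (auto simp: disjoint_mat_def)
  qed
  finally show ?thesis .
qed

lemma prod_fun_comp:
  assumes "finite S" "finite R" "g ` S \<subseteq> R"
  shows "(\<Prod>x\<in>S. f (g x)) = (\<Prod>y\<in>R. f y ^ card {x \<in> S. g x = y})"
proof -
  have "(\<Prod>x\<in>S. f (g x)) = (\<Prod>y\<in>g ` S. \<Prod>x\<in>{x \<in> S. g x = y}. f (g x))"
    by (rule prod.image_gen[OF assms(1)])
  also have "\<dots> = (\<Prod>y\<in>g ` S. f y ^ card {x \<in> S. g x = y})"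
    by (rule prod.cong[OF refl]) simp
  also have "\<dots> = (\<Prod>y\<in>R. f y ^ card {x \<in> S. g x = y})"
  proof (rule prod.mono_neutral_left[OF assms(2,3)])
    show "\<forall>y\<in>R - g ` S. f y ^ card {x \<in> S. g x = y} = 1"
    proof
      fix y assume "y \<in> R - g ` S"
      then have "{x \<in> S. g x = y} = {}" by blast
      then show "f y ^ card {x \<in> S. g x = y} = 1" by (metis card.empty power_0)
    qed
  qed
  finally show ?thesis .
qed

lemma row_weight_eq_prod_r_k: "row_weight n A = (\<Prod>k\<in>{0..n}. fact (n - k) ^ r_k n k A)"
proof -
  have "card {b. b < n \<and> (a, b) \<in> A} \<le> n" for a
    using card_mono[of "{..<n}" "{b. b < n \<and> (a, b) \<in> A}"] by auto
  then have "(\<lambda>a. card {b. b < n \<and> (a, b) \<in> A}) ` {..<n} \<subseteq> {0..n}"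
    by auto
  then show ?thesis
    unfolding row_weight_def r_k_def
    using prod_fun_comp[of "{..<n}" "{0..n}", where f = "\<lambda>k. fact (n - k)"] by (simp add: lessThan_def)
qed

lemma c_k_eq_r_k_converse: "c_k n k A = r_k n k (A\<inverse>)"
  by (simp add: c_k_def r_k_def)

lemma block_weight_eq_prod_psi: "int (block_weight n A) = (\<Prod>i = 0..n-2. int (fact (n - i)) ^ psi n i A)"
proof -
  have "int (block_weight n A) = (\<Prod>i = 0..n. int (fact (n - i)) ^ psi n i A)"
    by (simp add: block_weight_def row_weight_eq_prod_r_k c_k_eq_r_k_converse psi_def
        power_add prod.distrib)
  also have "\<dots> = (\<Prod>i = 0..n-2. int (fact (n - i)) ^ psi n i A)"
  proof (rule prod.mono_neutral_right)
    show "\<forall>i\<in>{0..n} - {0..n-2}. int (fact (n - i)) ^ psi n i A = 1"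
    proof
      fix i assume "i \<in> {0..n} - {0..n-2}"
      then have "n - i = 0 \<or> n - i = 1" by auto
      then show "int (fact (n - i)) ^ psi n i A = 1"
        by auto
    qed
  qed auto
  finally show ?thesis .
qed

lemma row_weight_singleton:
  assumes "a < n" "b < n"
  shows "row_weight n {(a, b)} = fact (n - 1) * fact n ^ (n - 1)"
proof -
  have "{y. y < n \<and> (x, y) \<in> {(a, b)}} = (if x = a then {b} else {})" for x
    using assms(2) by auto
  then have "row_weight n {(a, b)} = (\<Prod>x<n. fact (n - (if x = a then 1 else 0)))"
    unfolding row_weight_def by (intro prod.cong) auto
  also have "\<dots> = fact (n - 1) * (\<Prod>x\<in>{..<n} - {a}. fact (n - (if x = a then 1 else 0)))"
    using assms(1) by (subst prod.remove[of _ a]) auto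
  also have "(\<Prod>x\<in>{..<n} - {a}. fact (n - (if x = a then 1 else 0))) = (\<Prod>x\<in>{..<n} - {a}. fact n)"
    by (rule prod.cong) auto
  also have "\<dots> = fact n ^ (n - 1)"
    using assms(1) by simp
  finally show ?thesis .
qed

lemma sum_block_weight_card_less_2:
  assumes n: "0 < n"
  shows "(\<Sum>A\<in>{A \<in> binmats n. card A < 2}. (-1) ^ card A * int (block_weight n A)) = 0"
proof -
  have small: "{A \<in> binmats n. card A < 2} = insert {} ((\<lambda>p. {p}) ` ({..<n} \<times> {..<n}))"
  proof (intro equalityI subsetI)
    fix A assume A: "A \<in> {A \<in> binmats n. card A < 2}"
    then have "finite A"
      by (auto simp: binmats_def intro: finite_subset)
    then have "A = {} \<or> (\<exists>p. A = {p})"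
      using A by (auto simp: less_2_cases_iff card_1_singleton_iff)
    then show "A \<in> insert {} ((\<lambda>p. {p}) ` ({..<n} \<times> {..<n}))"
      using A by (auto simp: binmats_def)
  qed (auto simp: binmats_def)
  have singleton: "block_weight n {p} = (fact (n - 1) * fact n ^ (n - 1))^2" if p: "p \<in> {..<n} \<times> {..<n}" for p
  proof -
    obtain a b where "p = (a, b)" "a < n" "b < n"
      using p by auto
    moreover have "{(a, b)}\<inverse> = {(b, a)}"
      by auto
    ultimately show ?thesis
      using row_weight_singleton by (simp add: block_weight_def power2_eq_square)
  qed
  have "(\<Sum>p\<in>{..<n} \<times> {..<n}. int (block_weight n {p}))
      = (\<Sum>p\<in>{..<n} \<times> {..<n}. int ((fact (n - 1) * fact n ^ (n - 1))^2))"
    using singleton by simp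
  also have "\<dots> = int (n * n * (fact (n - 1) * fact n ^ (n - 1))^2)"
    by simp
  also have "n * n * (fact (n - 1) * fact n ^ (n - 1))^2 = (fact n ^ n)^2"
    using n by (cases n) (simp_all add: power2_eq_square algebra_simps)
  also have "(fact n ^ n)^2 = block_weight n {}"
    by (simp add: block_weight_def row_weight_def power2_eq_square)
  finally have singletons: "(\<Sum>p\<in>{..<n} \<times> {..<n}. int (block_weight n {p})) = int (block_weight n {})" .
  have "(\<Sum>A\<in>(\<lambda>p. {p}) ` ({..<n} \<times> {..<n}). (-1) ^ card A * int (block_weight n A))
      = (\<Sum>p\<in>{..<n} \<times> {..<n}. - int (block_weight n {p}))"
    by (subst sum.reindex) (auto simp: inj_on_def)
  then show ?thesis
    unfolding small by (subst sum.insert) (auto simp: sum_negf singletons)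
qed

definition permute_rows :: "(nat \<Rightarrow> nat) \<Rightarrow> (nat \<times> nat) set \<Rightarrow> (nat \<times> nat) set" where
  "permute_rows \<sigma> A = (\<lambda>(i, j). (\<sigma> i, j)) ` A"

lemma row_equiv_iff:
  "(A, B) \<in> row_equiv n \<longleftrightarrow> A \<in> binmats n \<and> (\<exists>\<sigma>. \<sigma> permutes {..<n} \<and> B = permute_rows \<sigma> A)"
  by (simp add: row_equiv_def permute_rows_def)

lemma mem_permute_rows: "\<sigma> permutes S \<Longrightarrow> (i, j) \<in> permute_rows \<sigma> A \<longleftrightarrow> (inv \<sigma> i, j) \<in> A"
  unfolding permute_rows_def
  by (auto simp: permutes_inverses image_iff intro!: bexI[where x = "(inv \<sigma> i, j)"])

lemma permute_rows_comp: "permute_rows \<tau> (permute_rows \<sigma> A) = permute_rows (\<tau> \<circ> \<sigma>) A"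
  by (simp add: permute_rows_def image_image case_prod_beta)

lemma permute_rows_id: "permute_rows id A = A"
  by (simp add: permute_rows_def case_prod_beta)

lemma permute_rows_in_binmats: "A \<in> binmats n \<Longrightarrow> \<sigma> permutes {..<n} \<Longrightarrow> permute_rows \<sigma> A \<in> binmats n"
  unfolding binmats_def permute_rows_def using permutes_lessThan_less by fastforce

lemma card_permute_rows: "\<sigma> permutes S \<Longrightarrow> card (permute_rows \<sigma> A) = card A"
  unfolding permute_rows_def by (rule card_image) (auto simp: inj_on_def dest: permutes_inj[THEN injD])

lemma card_permutes_inv_filter:
  assumes "\<sigma> permutes S"
  shows "card {x \<in> S. P (inv \<sigma> x)} = card {x \<in> S. P x}"
proof -
  have "{x \<in> S. P (inv \<sigma> x)} = \<sigma> ` {x \<in> S. P x}"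
  proof (intro equalityI subsetI)
    fix x assume "x \<in> {x \<in> S. P (inv \<sigma> x)}"
    then show "x \<in> \<sigma> ` {x \<in> S. P x}"
      using assms permutes_inv permutes_in_image permutes_inverses(1)[OF assms]
      by (intro image_eqI[of _ _ "inv \<sigma> x"]) fastforce+
  next
    fix x assume "x \<in> \<sigma> ` {x \<in> S. P x}"
    then show "x \<in> {x \<in> S. P (inv \<sigma> x)}"
      using assms permutes_in_image permutes_inverses(2)[OF assms] by fastforce
  qed
  then show ?thesis
    using permutes_inj[OF assms] by (simp add: card_image inj_on_subset)
qed

lemma psi_permute_rows:
  assumes \<sigma>: "\<sigma> permutes {..<n}"
  shows "psi n k (permute_rows \<sigma> A) = psi n k A"
proof -
  have "r_k n k (permute_rows \<sigma> A) = r_k n k A"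
    using card_permutes_inv_filter[OF \<sigma>, of "\<lambda>i. card {j. j < n \<and> (i, j) \<in> A} = k"]
    by (simp add: r_k_def mem_permute_rows[OF \<sigma>] lessThan_def)
  moreover have "c_k n k (permute_rows \<sigma> A) = c_k n k A"
    using card_permutes_inv_filter[OF \<sigma>, of "\<lambda>i. (i, _) \<in> A"]
    by (simp add: c_k_def mem_permute_rows[OF \<sigma>] lessThan_def)
  ultimately show ?thesis
    by (simp add: psi_def)
qed

lemma equiv_row_equiv: "equiv (binmats n) (row_equiv n)"
proof (rule equivI)
  show "row_equiv n \<subseteq> binmats n \<times> binmats n"
    using permute_rows_in_binmats by (auto simp: row_equiv_iff)
  show "refl_on (binmats n) (row_equiv n)"
  proof (rule refl_onI)
    fix A assume "A \<in> binmats n"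
    then show "(A, A) \<in> row_equiv n"
      using permutes_id[of "{..<n}"] permute_rows_id[of A] unfolding row_equiv_iff by metis
  qed
  show "sym (row_equiv n)"
  proof (rule symI)
    fix A B assume "(A, B) \<in> row_equiv n"
    then obtain \<sigma> where A: "A \<in> binmats n" and \<sigma>: "\<sigma> permutes {..<n}" and B: "B = permute_rows \<sigma> A"
      by (auto simp: row_equiv_iff)
    have "permute_rows (inv \<sigma>) B = A"
      using permutes_inv_o(2)[OF \<sigma>] by (simp add: B permute_rows_comp permute_rows_id)
    then show "(B, A) \<in> row_equiv n"
      using permute_rows_in_binmats[OF A \<sigma>] permutes_inv[OF \<sigma>] B by (auto simp: row_equiv_iff)
  qed
  show "trans (row_equiv n)"
  proof (rule transI)
    fix A B C assume "(A, B) \<in> row_equiv n" "(B, C) \<in> row_equiv n"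
    then obtain \<sigma> \<tau> where "A \<in> binmats n" "\<sigma> permutes {..<n}" "\<tau> permutes {..<n}"
      and "C = permute_rows (\<tau> \<circ> \<sigma>) A"
      by (auto simp: row_equiv_iff permute_rows_comp)
    then show "(A, C) \<in> row_equiv n"
      using permutes_compose by (auto simp: row_equiv_iff)
  qed
qed

lemma sum_quotient_class_rep:
  fixes f :: "'a \<Rightarrow> 'b::comm_semiring_1"
  assumes r: "equiv X r" and fin: "finite X" and f: "\<And>x y. (x, y) \<in> r \<Longrightarrow> f x = f y"
  shows "(\<Sum>C\<in>X // r. of_nat (card C) * f (SOME x. x \<in> C)) = (\<Sum>x\<in>X. f x)"
proof -
  have "(\<Sum>x\<in>X. f x) = (\<Sum>C\<in>X // r. \<Sum>x\<in>C. f x)"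
  proof -
    have "\<forall>C\<in>X // r. finite C"
      using in_quotient_imp_subset[OF r] fin finite_subset by blast
    moreover have "\<forall>C\<in>X // r. \<forall>D\<in>X // r. C \<noteq> D \<longrightarrow> C \<inter> D = {}"
      using quotient_disj[OF r] by blast
    ultimately show ?thesis
      using sum.Union_disjoint[of "X // r" f] Union_quotient[OF r] by simp
  qed
  also have "\<dots> = (\<Sum>C\<in>X // r. of_nat (card C) * f (SOME x. x \<in> C))"
  proof (rule sum.cong[OF refl])
    fix C assume C: "C \<in> X // r"
    then have "(SOME x. x \<in> C) \<in> C"
      using in_quotient_imp_non_empty[OF r] by (simp add: some_in_eq)
    then have "f x = f (SOME x. x \<in> C)" if "x \<in> C" for x
      using in_quotient_imp_in_rel[OF r C] that f by blast
    then show "(\<Sum>x\<in>C. f x) = of_nat (card C) * f (SOME x. x \<in> C)"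
      by simp
  qed
  finally show ?thesis ..
qed

lemma xi_eq_block_sum:
  assumes n: "0 < n"
  shows "xi n = block_sum n"
proof -
  define g where "g A = (if 2 \<le> card A then (-1) ^ card A * int (block_weight n A) else 0)" for A
  have g_invariant: "g A = g B" if "(A, B) \<in> row_equiv n" for A B
    using that by (auto simp: g_def row_equiv_iff block_weight_eq_prod_psi psi_permute_rows card_permute_rows)
  have "finite (binclasses n)"
    unfolding binclasses_def binmats_def using equiv_type[OF equiv_row_equiv]
    by (intro finite_quotient) (auto simp: binmats_def)
  then have "xi n = (\<Sum>C\<in>binclasses n. if 2 \<le> eps (rep C) then (-1) ^ eps (rep C) * int (card C) *
      (\<Prod>i = 0..n-2. int (fact (n - i)) ^ psi n i (rep C)) else 0)"
    unfolding xi_def by (rule sum.inter_filter)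
  also have "\<dots> = (\<Sum>C\<in>binclasses n. of_nat (card C) * g (rep C))"
    by (rule sum.cong[OF refl]) (simp add: g_def eps_def block_weight_eq_prod_psi)
  also have "\<dots> = (\<Sum>A\<in>binmats n. g A)"
    unfolding binclasses_def rep_def
    by (rule sum_quotient_class_rep[OF equiv_row_equiv _ g_invariant]) (simp add: binmats_def)
  also have "\<dots> = block_sum n - (\<Sum>A\<in>{A \<in> binmats n. card A < 2}. (-1) ^ card A * int (block_weight n A))"
  proof -
    have "block_sum n = (\<Sum>A\<in>binmats n. g A + (if card A < 2 then (-1) ^ card A * int (block_weight n A) else 0))"
      unfolding block_sum_def g_def by (rule sum.cong) auto
    also have "\<dots> = (\<Sum>A\<in>binmats n. g A) + (\<Sum>A\<in>{A \<in> binmats n. card A < 2}. (-1) ^ card A * int (block_weight n A))"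
      using sum.inter_filter[of "binmats n" "\<lambda>A. (-1) ^ card A * int (block_weight n A)" "\<lambda>A. card A < 2"]
      by (simp add: sum.distrib binmats_def)
    finally show ?thesis by simp
  qed
  also have "\<dots> = block_sum n"
    using sum_block_weight_card_less_2[OF n] by simp
  finally show ?thesis .
qed

theorem mainTheorem6:
  fixes n :: nat
  assumes "n \<ge> 2"
  shows "real (eta n) = (real (fact n)) ^ (2 * n) / 2 * real_of_int (xi n)"
proof -
  have "0 < n"
    using assms by simp
  then have "int (2 * eta n) = int (fact n ^ (2 * n)) * xi n"
    using eta_eq_block_sum xi_eq_block_sum by simp
  then have "real_of_int (int (2 * eta n)) = real_of_int (int (fact n ^ (2 * n)) * xi n)"
    by (rule arg_cong)
  then show ?thesis
    by simp
qed

end
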